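(* Let $[G,f,\cdot]$ be an MC system on a finite graph $G$ with vertex set $\{1,\ldots,n\}$ and finite linearly ordered state set $P$, and let $x\in P^n$. Then for any two fair update schedules $W$ and $W'$, the state $x$ reaches a fixed point under $[G,f,W]$ and under $[G,f,W']$, and these two fixed points coincide; call it $z$. Moreover, every state $y\in P^n$ with $z\le y\le x$ reaches the fixed point $z$ (under any fair update schedule).
   Context: Let $G=(V,E)$ be a finite graph with $V=\{1,\ldots,n\}$, and let $P$ be a finite set with a linear order $\le$. Each vertex $i$ has a state $x_i\in P$ and a local function $f_i$ which takes as arguments the states of $i$ and of its neighbors $k_1,\ldots,k_{d_i}$ and returns a new state of $i$. An infinite sequence $W=W_1W_2\cdots$ of subsets $W_j\subseteq V$ is a fair update schedule if for every $k\ge1$ and every vertex $i$ there exists $l>k$ with $i\in W_l$. Given an initial state $x^{(0)}=x\in P^n$, the state $x^{(j)}$ at time $j>0$ is obtained from $x^{(j-1)}$ by letting every vertex $i\in W_j$ take the new state $f_i$ applied to the states (in $x^{(j-1)}$) of $i$ and its neighbors, while vertices not in $W_j$ keep their states; write $[G,f,W]^{(j)}(x)=x^{(j)}$. A state $x$ reaches a fixed point $z$ under $[G,f,W]$ if there is $k\ge0$ with $[G,f,W]^{(j)}(x)=[G,f,W]^{(k)}(x)=z$ for all $j>k$. $P^q$ carries the product partial order: $(x_1,\ldots,x_q)\le(y_1,\ldots,y_q)$ iff $x_j\le y_j$ for all $j$. A function $g\colon P^q\to P$ is monotone if $x\le y$ implies $g(x)\le g(y)$. A local function $f_i\colon(x_i,x_{k_1},\ldots,x_{k_{d_i}})\mapsto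 x_i'$ is contractive if $x_i'\le x_i$ for every argument. The system is an MC (monotone-contractive) system if every local function is monotone and contractive. *)

theory Defs
  imports Main
begin

text \<open>Vertices form a finite type 'v; states are elements of a finite linear order 'p.
  A global state is a function 'v \<Rightarrow> 'p (an element of P^n); its order is the
  pointwise (product) order le_fun.\<close>

definition graph :: "('v \<Rightarrow> 'v \<Rightarrow> bool) \<Rightarrow> bool" where
  "graph E \<longleftrightarrow> (\<forall>i j. E i j \<longrightarrow> E j i) \<and> (\<forall>i. \<not> E i i)"

definition local_fun :: "('v \<Rightarrow> 'v \<Rightarrow> bool) \<Rightarrow> 'v \<Rightarrow> (('v \<Rightarrow> 'p) \<Rightarrow> 'p) \<Rightarrow> bool" where
  "local_fun E i g \<longleftrightarrow>
     (\<forall>x y. (\<forall>j. (j = i \<or> E i j) \<longrightarrow> x j = y j) \<longrightarrow> g x = g y)"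

definition monotone_local :: "(('v \<Rightarrow> 'p::order) \<Rightarrow> 'p) \<Rightarrow> bool" where
  "monotone_local g \<longleftrightarrow> (\<forall>x y. x \<le> y \<longrightarrow> g x \<le> g y)"

definition contractive_local :: "'v \<Rightarrow> (('v \<Rightarrow> 'p::order) \<Rightarrow> 'p) \<Rightarrow> bool" where
  "contractive_local i g \<longleftrightarrow> (\<forall>x. g x \<le> x i)"

definition MC_system :: "('v \<Rightarrow> 'v \<Rightarrow> bool) \<Rightarrow> ('v \<Rightarrow> ('v \<Rightarrow> 'p::order) \<Rightarrow> 'p) \<Rightarrow> bool" where
  "MC_system E f \<longleftrightarrow> graph E \<and>
     (\<forall>i. local_fun E i (f i) \<and> monotone_local (f i) \<and> contractive_local i (f i))"

text \<open>Update schedules W = W_1 W_2 ...; index 0 is unused.\<close>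
definition fair :: "(nat \<Rightarrow> 'v set) \<Rightarrow> bool" where
  "fair W \<longleftrightarrow> (\<forall>k\<ge>1. \<forall>i. \<exists>l>k. i \<in> W l)"

fun run :: "('v \<Rightarrow> ('v \<Rightarrow> 'p) \<Rightarrow> 'p) \<Rightarrow> (nat \<Rightarrow> 'v set) \<Rightarrow> nat \<Rightarrow> ('v \<Rightarrow> 'p) \<Rightarrow> ('v \<Rightarrow> 'p)" where
  "run f W 0 x = x"
| "run f W (Suc j) x = (\<lambda>i. if i \<in> W (Suc j) then f i (run f W j x) else run f W j x i)"

definition reaches :: "('v \<Rightarrow> ('v \<Rightarrow> 'p) \<Rightarrow> 'p) \<Rightarrow> (nat \<Rightarrow> 'v set) \<Rightarrow> ('v \<Rightarrow> 'p) \<Rightarrow> ('v \<Rightarrow> 'p) \<Rightarrow> bool" where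
  "reaches f W x z \<longleftrightarrow> (\<exists>k. run f W k x = z \<and> (\<forall>j>k. run f W j x = z))"

end

theory Submission
  imports Defs
begin

text \<open>Contractivity makes every run decrease pointwise, so in the finite state space it becomes
  constant, and fairness makes the limit a fixed point.  Monotonicity keeps every run above any
  fixed point it starts above, and the pointwise maximum z of all fixed points below x is again
  a fixed point.
  Hence a run from any y with z \<le> y \<le> x ends in a fixed point that lies both below y \<le> x
  (so below z) and above z, independently of the schedule.\<close>

lemma antimono_finite_eventually_const:
  fixes s :: "nat \<Rightarrow> 'a::{order,finite}"
  assumes "antimono s"
  shows "\<exists>k. \<forall>j\<ge>k. s j = s k"
proof -
  let ?c = "\<lambda>j. card {v. v \<le> s j}"
  obtain k where k: "\<And>j. ?c k \<le> ?c j"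
    using ex_has_least_nat[of "\<lambda>_. True" 0 ?c] by blast
  have "s j = s k" if "k \<le> j" for j
  proof -
    have "s j \<le> s k" using assms that by (rule antimonoD)
    then have sub: "{v. v \<le> s j} \<subseteq> {v. v \<le> s k}" by (auto intro: order_trans)
    then have "{v. v \<le> s j} = {v. v \<le> s k}"
      using k[of j] by (intro card_subset_eq) (auto dest: card_mono[rotated])
    then have "s k \<le> s j" by blast
    with \<open>s j \<le> s k\<close> show ?thesis by (rule antisym)
  qed
  then show ?thesis by blast
qed

definition fixed_point :: "('v \<Rightarrow> ('v \<Rightarrow> 'p) \<Rightarrow> 'p) \<Rightarrow> ('v \<Rightarrow> 'p) \<Rightarrow> bool" where
  "fixed_point f z \<longleftrightarrow> (\<forall>i. f i z = z i)"

lemma antimono_run: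
  assumes "\<And>i. contractive_local i (f i)"
  shows "antimono (\<lambda>j. run f W j y)"
  using assms unfolding antimono_iff_le_Suc contractive_local_def by (simp add: le_fun_def)

lemma fixed_point_le_run:
  assumes "\<And>i. monotone_local (f i)" and "fixed_point f z" and "z \<le> y"
  shows "z \<le> run f W j y"
proof (induction j)
  case 0
  then show ?case using assms(3) by simp
next
  case (Suc j)
  have "z i \<le> f i (run f W j y)" for i
    using assms(1,2) Suc unfolding fixed_point_def monotone_local_def by metis
  with Suc show ?case by (auto simp: le_fun_def)
qed

lemma fair_run_eventually_fixed_point:
  fixes f :: "'v::finite \<Rightarrow> ('v \<Rightarrow> 'p::{order,finite}) \<Rightarrow> 'p"
  assumes "\<And>i. contractive_local i (f i)" and "fair W"
  shows "\<exists>k. fixed_point f (run f W k y) \<and> (\<forall>j\<ge>k. run f W j y = run f W k y)"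
proof -
  obtain k where k: "\<And>j. k \<le> j \<Longrightarrow> run f W j y = run f W k y"
    using antimono_finite_eventually_const[OF antimono_run[OF assms(1)]] by blast
  have "f i (run f W k y) = run f W k y i" for i
  proof -
    have "\<exists>l>Suc k. i \<in> W l" using assms(2) unfolding fair_def by simp
    then obtain l where l: "Suc k < l" "i \<in> W l" by blast
    then obtain l' where l': "l = Suc l'" "k \<le> l'"
      by (metis Suc_lessE less_imp_le_nat)
    have "run f W k y i = run f W (Suc l') y i" using k[of l] l l' by simp
    also have "\<dots> = f i (run f W l' y)" using l l' by simp
    also have "\<dots> = f i (run f W k y)" using k[OF l'(2)] by simp
    finally show ?thesis by simp
  qed
  with k show ?thesis unfolding fixed_point_def by blast
qed

text \<open>The witness at coordinate i is a fixed point attaining the maximum there; monotonicity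
  and contractivity then pin down f i z = z i.\<close>

lemma greatest_fixed_point_below:
  fixes f :: "'v \<Rightarrow> ('v \<Rightarrow> 'p::{linorder,finite}) \<Rightarrow> 'p"
  assumes mon: "\<And>i. monotone_local (f i)" and con: "\<And>i. contractive_local i (f i)"
  shows "\<exists>z. fixed_point f z \<and> z \<le> x \<and> (\<forall>w. fixed_point f w \<and> w \<le> x \<longrightarrow> w \<le> z)"
proof -
  define S where "S = {w. fixed_point f w \<and> w \<le> x}"
  define z where "z = (\<lambda>i. Max ((\<lambda>w. w i) ` S))"
  have "f i (\<lambda>_. Min UNIV) = Min UNIV" for i
  proof (rule antisym)
    show "f i (\<lambda>_. Min UNIV) \<le> Min UNIV"
      using con[of i] unfolding contractive_local_def by (rule spec[of _ "\<lambda>_. Min UNIV"])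
    show "Min UNIV \<le> f i (\<lambda>_. Min UNIV)" by (rule Min_le) simp_all
  qed
  moreover have "(\<lambda>_. Min UNIV) \<le> x" by (rule le_funI, rule Min_le) simp_all
  ultimately have "S \<noteq> {}" unfolding S_def fixed_point_def by blast
  then have "z i \<in> (\<lambda>w. w i) ` S" for i unfolding z_def by (intro Max_in) simp_all
  then have witness: "\<exists>w\<in>S. z i = w i" for i by blast
  have above: "w \<le> z" if "w \<in> S" for w
    using that unfolding z_def by (intro le_funI Max_ge) simp_all
  have "f i z = z i" for i
  proof -
    obtain w where w: "w \<in> S" "z i = w i" using witness by blast
    then have "z i = f i w" unfolding S_def fixed_point_def by simp
    also have "\<dots> \<le> f i z" using mon above[OF w(1)] unfolding monotone_local_def by blast
    finally show ?thesis using con unfolding contractive_local_def by (meson antisym)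
  qed
  moreover have "z \<le> x"
  proof (rule le_funI)
    fix i
    obtain w where "w \<in> S" "z i = w i" using witness by blast
    then show "z i \<le> x i" unfolding S_def le_fun_def by simp
  qed
  ultimately show ?thesis using above unfolding fixed_point_def S_def by blast
qed

lemma reaches_greatest_fixed_point_below:
  fixes f :: "'v::finite \<Rightarrow> ('v \<Rightarrow> 'p::{order,finite}) \<Rightarrow> 'p"
  assumes mon: "\<And>i. monotone_local (f i)" and con: "\<And>i. contractive_local i (f i)"
    and "fair W" and "fixed_point f z" and "z \<le> y"
    and greatest: "\<And>w. fixed_point f w \<Longrightarrow> w \<le> y \<Longrightarrow> w \<le> z"
  shows "reaches f W y z"
proof -
  obtain k where fix_k: "fixed_point f (run f W k y)"
    and k: "\<forall>j\<ge>k. run f W j y = run f W k y"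
    using fair_run_eventually_fixed_point[OF con \<open>fair W\<close>] by blast
  have "run f W k y \<le> y"
    using antimonoD[OF antimono_run[OF con], of 0 k] by simp
  then have "run f W k y \<le> z" using greatest fix_k by blast
  moreover have "z \<le> run f W k y" using fixed_point_le_run[OF mon assms(4,5)] .
  ultimately have "run f W k y = z" by (rule antisym)
  with k show ?thesis unfolding reaches_def by (metis less_imp_le)
qed

theorem theorem2:
  fixes E :: "'v::finite \<Rightarrow> 'v \<Rightarrow> bool"
    and f :: "'v \<Rightarrow> ('v \<Rightarrow> 'p::{linorder,finite}) \<Rightarrow> 'p"
    and x :: "'v \<Rightarrow> 'p"
  assumes "MC_system E f"
  shows "\<exists>z. (\<forall>W. fair W \<longrightarrow> reaches f W x z)
           \<and> (\<forall>y. z \<le> y \<and> y \<le> x \<longrightarrow> (\<forall>W. fair W \<longrightarrow> reaches f W y z))"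
proof -
  have mon: "\<And>i. monotone_local (f i)" and con: "\<And>i. contractive_local i (f i)"
    using assms unfolding MC_system_def by auto
  obtain z where z: "fixed_point f z" "z \<le> x"
    and greatest: "\<And>w. fixed_point f w \<Longrightarrow> w \<le> x \<Longrightarrow> w \<le> z"
    using greatest_fixed_point_below[OF mon con] by blast
  have "reaches f W y z" if "z \<le> y" "y \<le> x" "fair W" for y W
    using reaches_greatest_fixed_point_below[OF mon con \<open>fair W\<close> z(1) \<open>z \<le> y\<close>]
      greatest order_trans \<open>y \<le> x\<close> by blast
  with z(2) show ?thesis by blast
qed

end
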